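(* For a twisted $n$-gon with corner invariants $(x_0,\dots,x_{2n-1})$ define $$\mathcal{F}_1=\prod_{i=0}^{n-1}\frac{x_{2i}}{x_{2i}-1},\quad \mathcal{F}_2=\prod_{i=0}^{n-1}\frac{x_{2i+1}}{x_{2i+1}-1},\quad \mathcal{F}_3=\prod_{i=0}^{n-1}\frac{x_{2i}}{x_{2i+1}},\quad \mathcal{F}_4=\prod_{i=0}^{n-1}\frac{1-x_{2i}}{1-x_{2i+1}}.$$ Each $\mathcal{F}_j$ ($j=1,2,3,4$) is invariant under $T_3$ (and hence under $T_3^{-1}$): if $[P]$ and $T_3[P]$ are defined and $\mathcal{F}_j$ is defined (finite, with nonzero denominators) at both, then $\mathcal{F}_j(T_3[P])=\mathcal{F}_j([P])$. Equivalently, each $\mathcal{F}_j$ is invariant under the rational map $x\mapsto x'$ given by $x'_{2i}=x_{2i-2}\frac{x_{2i-4}+x_{2i-1}-1}{x_{2i-2}x_{2i-1}-(1-x_{2i+1})(1-x_{2i-4})}$, $x'_{2i+1}=x_{2i+3}\frac{x_{2i+2}+x_{2i+5}-1}{x_{2i+2}x_{2i+3}-(1-x_{2i+5})(1-x_{2i})}$ (indices mod $2n$).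
   Context: A twisted $n$-gon is a map $P:\mathbb{Z}\to\mathbb{RP}^2$ with every three consecutive points non-collinear and $P_{i+n}=M(P_i)$ for a fixed $M\in\mathrm{PGL}_3(\mathbb{R})$; $\mathcal{P}_n$ is the set of classes modulo projective equivalence. $T_3$ maps a $3$-nice ($P_i,P_{i+1},P_{i+3},P_{i+4}$ in general position for all $i$) twisted $n$-gon $P$ to $P'$ with $P'_i=P_iP_{i+3}\cap P_{i+1}P_{i+4}$; relabelling indices does not change the $\mathcal{F}_j$. Inverse cross ratio: for four collinear points $A,B,C,D$, map their line projectively to the $x$-axis with coordinates $a,b,c,d$ and set $\chi(A,B,C,D)=\frac{(a-b)(c-d)}{(a-c)(b-d)}$ (value in $\mathbb{R}\cup\{\infty\}$, projectively invariant). Corner invariants: $x_{2i}=\chi(P_{i-2},P_{i-1},P_{i-2}P_{i-1}\cap P_iP_{i+1},P_{i-2}P_{i-1}\cap P_{i+1}P_{i+2})$ and $x_{2i+1}=\chi(P_{i+2},P_{i+1},P_{i+2}P_{i+1}\cap P_iP_{i-1},P_{i+2}P_{i+1}\cap P_{i-1}P_{i-2})$, with $x_{j+2n}=x_j$. *)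

theory Defs
  imports "HOL-Analysis.Analysis"
begin

text \<open>Points of RP^2 are represented by homogeneous coordinate vectors in real^3
  (nonzero; proportional vectors represent the same point).  The line through two
  points A, B has dual coordinates cross3 A B; the intersection of two lines
  l, m is cross3 l m.\<close>

definition collinear3 :: "real^3 \<Rightarrow> real^3 \<Rightarrow> real^3 \<Rightarrow> bool" where
  "collinear3 A B C \<longleftrightarrow> (cross3 A B) \<bullet> C = 0"

definition line_through :: "real^3 \<Rightarrow> real^3 \<Rightarrow> real^3" where
  "line_through A B = cross3 A B"

definition meet :: "real^3 \<Rightarrow> real^3 \<Rightarrow> real^3" where
  "meet l m = cross3 l m"

definition twisted_ngon :: "nat \<Rightarrow> (int \<Rightarrow> real^3) \<Rightarrow> bool" where
  "twisted_ngon n P \<longleftrightarrow>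
     (\<forall>i. \<not> collinear3 (P i) (P (i+1)) (P (i+2))) \<and>
     (\<exists>M :: real^3^3. invertible M \<and>
        (\<forall>i. \<exists>c::real. c \<noteq> 0 \<and> P (i + int n) = c *\<^sub>R (M *v P i)))"

definition general_position4 :: "real^3 \<Rightarrow> real^3 \<Rightarrow> real^3 \<Rightarrow> real^3 \<Rightarrow> bool" where
  "general_position4 A B C D \<longleftrightarrow>
     \<not> collinear3 A B C \<and> \<not> collinear3 A B D \<and> \<not> collinear3 A C D \<and> \<not> collinear3 B C D"

definition three_nice :: "(int \<Rightarrow> real^3) \<Rightarrow> bool" where
  "three_nice P \<longleftrightarrow> (\<forall>i. general_position4 (P i) (P (i+1)) (P (i+3)) (P (i+4)))"

definition T3 :: "(int \<Rightarrow> real^3) \<Rightarrow> (int \<Rightarrow> real^3)" where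
  "T3 P = (\<lambda>i. meet (line_through (P i) (P (i+3))) (line_through (P (i+1)) (P (i+4))))"

text \<open>Inverse cross ratio of four collinear points A,B,C,D (A, B distinct) in
  homogeneous coordinates.  With L = A x B the normal of their line, the scalar
  (X x Y) . L is (a nonzero constant times) the 2x2 determinant of X, Y in any
  projective coordinate of the line, i.e. (up to the scalings of the
  representatives, which cancel) the difference x - y of affine coordinates.
  Hence chi = (a-b)(c-d)/((a-c)(b-d)).  The value infinity (denominator zero)
  is represented by None.\<close>

definition icr :: "real^3 \<Rightarrow> real^3 \<Rightarrow> real^3 \<Rightarrow> real^3 \<Rightarrow> real option" where
  "icr A B C D =
     (let L = cross3 A B;
          br = (\<lambda>X Y. (cross3 X Y) \<bullet> L)
      in if br A C * br B D = 0 then None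
         else Some (br A B * br C D / (br A C * br B D)))"

definition corner_even :: "(int \<Rightarrow> real^3) \<Rightarrow> int \<Rightarrow> real option" where
  "corner_even P i =
     icr (P (i-2)) (P (i-1))
         (meet (line_through (P (i-2)) (P (i-1))) (line_through (P i) (P (i+1))))
         (meet (line_through (P (i-2)) (P (i-1))) (line_through (P (i+1)) (P (i+2))))"

definition corner_odd :: "(int \<Rightarrow> real^3) \<Rightarrow> int \<Rightarrow> real option" where
  "corner_odd P i =
     icr (P (i+2)) (P (i+1))
         (meet (line_through (P (i+2)) (P (i+1))) (line_through (P i) (P (i-1))))
         (meet (line_through (P (i+2)) (P (i+1))) (line_through (P (i-1)) (P (i-2))))"

definition Finv :: "nat \<Rightarrow> nat \<Rightarrow> (int \<Rightarrow> real^3) \<Rightarrow> real option" where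
  "Finv j n P =
     (let I = {0..<int n}; xe = corner_even P; xo = corner_odd P in
      if j = 1 then
        (if (\<forall>i\<in>I. xe i \<noteq> None \<and> the (xe i) - 1 \<noteq> 0)
         then Some (\<Prod>i\<in>I. the (xe i) / (the (xe i) - 1)) else None)
      else if j = 2 then
        (if (\<forall>i\<in>I. xo i \<noteq> None \<and> the (xo i) - 1 \<noteq> 0)
         then Some (\<Prod>i\<in>I. the (xo i) / (the (xo i) - 1)) else None)
      else if j = 3 then
        (if (\<forall>i\<in>I. xe i \<noteq> None \<and> xo i \<noteq> None \<and> the (xo i) \<noteq> 0)
         then Some (\<Prod>i\<in>I. the (xe i) / the (xo i)) else None)
      else if j = 4 then
        (if (\<forall>i\<in>I. xe i \<noteq> None \<and> xo i \<noteq> None \<and> 1 - the (xo i) \<noteq> 0)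
         then Some (\<Prod>i\<in>I. (1 - the (xe i)) / (1 - the (xo i))) else None)
      else None)"

end

theory Submission
  imports Defs
begin

text \<open>Write everything in brackets [A B C] = det (A, B, C). Each corner invariant is a ratio of
  brackets of nearby vertices, and the vertices of T3 P are meets of diagonals, so the corner
  invariants of T3 P are ratios of bracket monomials in P as well. For each j there is an explicit
  bracket monomial g (the gauge) in the vertices P (i-2), ..., P (i+5) such that the i-th factor of
  F_j at T3 P equals the i-th factor at P times g i / g (i+1). The gauge has degree zero in every
  vertex and in det M, so the monodromy P (i+n) = c i M P i gives g n = g 0, and the product over
  one period telescopes.\<close>

unbundle cross3_syntax

section \<open>Brackets\<close>

definition bracket :: "real^3 \<Rightarrow> real^3 \<Rightarrow> real^3 \<Rightarrow> real" where
  "bracket a b c = a \<bullet> (b \<times> c)"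

lemma cross_inner_eq_bracket: "(a \<times> b) \<bullet> c = bracket a b c"
  unfolding bracket_def by (simp add: cross3_simps)

lemma collinear3_iff_bracket: "collinear3 A B C \<longleftrightarrow> bracket A B C = 0"
  unfolding collinear3_def by (simp add: cross_inner_eq_bracket)

lemma bracket_swap_12: "bracket a b c = - bracket b a c"
  unfolding bracket_def by (simp add: cross3_simps)

lemma bracket_swap_23: "bracket a b c = - bracket a c b"
  unfolding bracket_def by (simp add: cross3_simps)

lemma bracket_sort:
  fixes q :: "int \<Rightarrow> real^3"
  shows "b < a \<Longrightarrow> bracket (q a) (q b) (q c) = - bracket (q b) (q a) (q c)"
    and "c < b \<Longrightarrow> bracket (q a) (q b) (q c) = - bracket (q a) (q c) (q b)"
  by (metis bracket_swap_12) (metis bracket_swap_23)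

lemma cross_cross_eq: "(a \<times> b) \<times> (c \<times> d) = bracket a c d *\<^sub>R b - bracket b c d *\<^sub>R a"
  unfolding bracket_def using exhaust_3 by (force simp add: cross3_simps)

lemma bracket_pluecker:
  "bracket a c d * bracket b d e - bracket b c d * bracket a d e = bracket a b d * bracket c d e"
  unfolding bracket_def by (simp add: cross3_simps)

lemma bracket_cross_shared_13: "bracket (a \<times> b) x (b \<times> c) = - bracket a b c * (x \<bullet> b)"
  unfolding bracket_def by (simp add: cross3_simps)

lemma bracket_cross_chain_12: "bracket (a \<times> b) (b \<times> c) (d \<times> e) = bracket a b c * bracket b d e"
  unfolding bracket_def by (simp add: cross3_simps)

lemma bracket_cross_chain_23: "bracket (d \<times> e) (a \<times> b) (b \<times> c) = bracket a b c * bracket d e b"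
  unfolding bracket_def by (simp add: cross3_simps)

lemma bracket_cross3:
  "bracket (a \<times> b) (c \<times> d) (e \<times> f) = bracket c d f * bracket a b e - bracket c d e * bracket a b f"
  unfolding bracket_def by (simp add: cross3_simps)

lemma bracket_matrix_scaleR:
  "bracket (a *\<^sub>R (M *v x)) (b *\<^sub>R (M *v y)) (c *\<^sub>R (M *v z)) = a * b * c * det M * bracket x y z"
proof -
  have "bracket (M *v x) (M *v y) (M *v z) = x \<bullet> (transpose M *v ((M *v y) \<times> (M *v z)))"
    unfolding bracket_def by (metis dot_lmul_matrix vector_transpose_matrix)
  also have "\<dots> = det M * bracket x y z"
    unfolding cross_matrix_mult bracket_def by simp
  finally show ?thesis
    unfolding bracket_def by (simp add: cross_mult_left cross_mult_right)
qed

lemma bracket_cross_matrix_scaleR: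
  "bracket ((a *\<^sub>R (M *v x)) \<times> (b *\<^sub>R (M *v y))) ((c *\<^sub>R (M *v z)) \<times> (d *\<^sub>R (M *v u)))
     ((e *\<^sub>R (M *v v)) \<times> (f *\<^sub>R (M *v w)))
   = a * b * c * d * e * f * (det M)\<^sup>2 * bracket (x \<times> y) (z \<times> u) (v \<times> w)"
  unfolding bracket_cross3 bracket_matrix_scaleR by (simp add: algebra_simps power2_eq_square)

section \<open>Cross ratios of meets\<close>

lemma icr_linear_combination:
  "icr A B (a1 *\<^sub>R A + a2 *\<^sub>R B) (b1 *\<^sub>R A + b2 *\<^sub>R B) =
   (if a2 * b1 * ((A \<times> B) \<bullet> (A \<times> B)) = 0 then None
    else Some ((a1 * b2 - a2 * b1) / (- (a2 * b1))))"
proof -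
  define k where "k = (A \<times> B) \<bullet> (A \<times> B)"
  have BA: "B \<times> A = - (A \<times> B)" by (rule cross_skew)
  have "(A \<times> (a1 *\<^sub>R A + a2 *\<^sub>R B)) \<bullet> (A \<times> B) = a2 * k"
    "(B \<times> (b1 *\<^sub>R A + b2 *\<^sub>R B)) \<bullet> (A \<times> B) = - b1 * k"
    "((a1 *\<^sub>R A + a2 *\<^sub>R B) \<times> (b1 *\<^sub>R A + b2 *\<^sub>R B)) \<bullet> (A \<times> B) = (a1 * b2 - a2 * b1) * k"
    by (simp_all add: k_def cross_add_right cross_add_left cross_mult_right cross_mult_left BA
        algebra_simps)
  then show ?thesis
    unfolding icr_def Let_def k_def[symmetric] by (auto simp: field_simps)
qed

lemma icr_meet:
  "icr A B ((A \<times> B) \<times> (X \<times> Y)) ((A \<times> B) \<times> (Y \<times> Z)) =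
   (if bracket A X Y * bracket B Y Z * ((A \<times> B) \<bullet> (A \<times> B)) = 0 then None
    else Some (bracket A B Y * bracket X Y Z / (bracket A X Y * bracket B Y Z)))"
proof -
  have meet: "(A \<times> B) \<times> (X \<times> Y) = (- bracket B X Y) *\<^sub>R A + bracket A X Y *\<^sub>R B" for X Y
    by (simp add: cross_cross_eq)
  have "(- bracket B X Y * bracket A Y Z - bracket A X Y * - bracket B Y Z)
      / - (bracket A X Y * - bracket B Y Z)
    = bracket A B Y * bracket X Y Z / (bracket A X Y * bracket B Y Z)"
    using bracket_pluecker[of A X Y B Z] by (simp add: field_simps)
  then show ?thesis
    unfolding meet icr_linear_combination by auto
qed

lemma icr_meet_SomeD:
  assumes "icr A B ((A \<times> B) \<times> (X \<times> Y)) ((A \<times> B) \<times> (Y \<times> Z)) = Some x"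
  shows "bracket A X Y \<noteq> 0" "bracket B Y Z \<noteq> 0"
    and "x = bracket A B Y * bracket X Y Z / (bracket A X Y * bracket B Y Z)"
    and "1 - x = bracket B X Y * bracket A Y Z / (bracket A X Y * bracket B Y Z)"
proof -
  from assms show nz: "bracket A X Y \<noteq> 0" "bracket B Y Z \<noteq> 0"
    and x: "x = bracket A B Y * bracket X Y Z / (bracket A X Y * bracket B Y Z)"
    unfolding icr_meet by (auto split: if_splits)
  have "1 - x = (bracket A X Y * bracket B Y Z - bracket A B Y * bracket X Y Z)
      / (bracket A X Y * bracket B Y Z)"
    using nz unfolding x by (simp add: field_simps)
  then show "1 - x = bracket B X Y * bracket A Y Z / (bracket A X Y * bracket B Y Z)"
    using bracket_pluecker[of A X Y B Z] by (simp add: algebra_simps)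
qed

lemma corner_even_in_brackets:
  assumes "corner_even q 0 \<noteq> None"
  shows "bracket (q (-2)) (q 0) (q 1) \<noteq> 0" "bracket (q (-1)) (q 1) (q 2) \<noteq> 0"
    and "the (corner_even q 0) = bracket (q (-2)) (q (-1)) (q 1) * bracket (q 0) (q 1) (q 2)
           / (bracket (q (-2)) (q 0) (q 1) * bracket (q (-1)) (q 1) (q 2))"
    and "1 - the (corner_even q 0) = bracket (q (-1)) (q 0) (q 1) * bracket (q (-2)) (q 1) (q 2)
           / (bracket (q (-2)) (q 0) (q 1) * bracket (q (-1)) (q 1) (q 2))"
  using icr_meet_SomeD[of "q (-2)" "q (-1)" "q 0" "q 1" "q 2" "the (corner_even q 0)"] assms
  unfolding corner_even_def meet_def line_through_def by auto

lemma corner_odd_in_brackets: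
  assumes "corner_odd q 0 \<noteq> None"
  shows "bracket (q (-1)) (q 0) (q 2) \<noteq> 0" "bracket (q (-2)) (q (-1)) (q 1) \<noteq> 0"
    and "the (corner_odd q 0) = bracket (q (-1)) (q 1) (q 2) * bracket (q (-2)) (q (-1)) (q 0)
           / (bracket (q (-1)) (q 0) (q 2) * bracket (q (-2)) (q (-1)) (q 1))"
    and "1 - the (corner_odd q 0) = bracket (q (-1)) (q 0) (q 1) * bracket (q (-2)) (q (-1)) (q 2)
           / (bracket (q (-1)) (q 0) (q 2) * bracket (q (-2)) (q (-1)) (q 1))"
  using icr_meet_SomeD[of "q 2" "q 1" "q 0" "q (-1)" "q (-2)" "the (corner_odd q 0)"] assms
  unfolding corner_odd_def meet_def line_through_def by (auto simp: bracket_sort)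

lemma corner_even_shift: "corner_even (\<lambda>k. P (i + k)) 0 = corner_even P i"
  unfolding corner_even_def by simp

lemma corner_odd_shift: "corner_odd (\<lambda>k. P (i + k)) 0 = corner_odd P i"
  unfolding corner_odd_def by simp

definition diagonal :: "(int \<Rightarrow> real^3) \<Rightarrow> int \<Rightarrow> real^3" where
  "diagonal q k = q k \<times> q (k + 3)"

lemma T3_eq_diagonal: "T3 q k = diagonal q k \<times> diagonal q (k + 1)"
  unfolding T3_def meet_def line_through_def diagonal_def by (simp add: add.assoc)

lemma T3_shift: "T3 (\<lambda>k. P (i + k)) = (\<lambda>k. T3 P (i + k))"
  unfolding T3_def by (simp add: add.assoc)

text \<open>The brackets made nonzero by the hypotheses on P and T3 P. They are phrased through
  index patterns so that the simplifier can discharge nonzeroness of brackets with literal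
  indices.\<close>

definition nondegenerate :: "(int \<Rightarrow> real^3) \<Rightarrow> bool" where
  "nondegenerate q \<longleftrightarrow>
     (\<forall>a b c. (b - a, c - b) \<in> {(1, 1), (1, 2), (2, 1), (1, 3)} \<longrightarrow>
        bracket (q a) (q b) (q c) \<noteq> 0) \<and>
     (\<forall>k. bracket (diagonal q k) (diagonal q (k + 1)) (diagonal q (k + 2)) \<noteq> 0)"

lemma nondegenerate_bracket_nonzero:
  "nondegenerate q \<Longrightarrow> (b - a, c - b) \<in> {(1, 1), (1, 2), (2, 1), (1, 3)} \<Longrightarrow>
    bracket (q a) (q b) (q c) \<noteq> 0"
  unfolding nondegenerate_def by blast

lemma nondegenerate_diagonal_bracket_nonzero:
  "nondegenerate q \<Longrightarrow> (b, c, d, e, f) = (a + 3, a + 1, a + 4, a + 2, a + 5) \<Longrightarrow>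
    bracket (q a \<times> q b) (q c \<times> q d) (q e \<times> q f) \<noteq> 0"
  unfolding nondegenerate_def diagonal_def by (auto simp: add.assoc)

lemma nondegenerate_shift: "nondegenerate P \<Longrightarrow> nondegenerate (\<lambda>k. P (i + k))"
  unfolding nondegenerate_def diagonal_def
  by (metis (no_types, lifting) add.assoc add_diff_cancel_left)

lemma nondegenerate_if_T3_twisted:
  assumes P: "twisted_ngon n P" and nice: "three_nice P" and T3P: "twisted_ngon n (T3 P)"
  shows "nondegenerate P"
  unfolding nondegenerate_def
proof (intro conjI allI impI)
  fix a b c :: int
  assume "(b - a, c - b) \<in> {(1, 1), (1, 2), (2, 1), (1, 3)}"
  then consider "b = a + 1" "c = a + 2" | "b = a + 1" "c = a + 3" | "b = a + 2" "c = a + 3"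
    | "b = a + 1" "c = a + 4"
    by auto
  moreover have "bracket (P a) (P (a + 1)) (P (a + 2)) \<noteq> 0"
    using P unfolding twisted_ngon_def collinear3_iff_bracket by (simp add: add.assoc)
  moreover have "general_position4 (P a) (P (a + 1)) (P (a + 3)) (P (a + 4))"
    and "general_position4 (P (a - 1)) (P (a - 1 + 1)) (P (a - 1 + 3)) (P (a - 1 + 4))"
    using nice unfolding three_nice_def by blast+
  ultimately show "bracket (P a) (P b) (P c) \<noteq> 0"
    unfolding general_position4_def collinear3_iff_bracket by cases (simp_all add: algebra_simps)
next
  fix k
  have "bracket (T3 P k) (T3 P (k + 1)) (T3 P (k + 2)) \<noteq> 0"
    using T3P unfolding twisted_ngon_def collinear3_iff_bracket by (simp add: add.assoc)
  then show "bracket (diagonal P k) (diagonal P (k + 1)) (diagonal P (k + 2)) \<noteq> 0"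
    by (simp add: T3_eq_diagonal bracket_cross_chain_12 ac_simps)
qed

section \<open>Gauges for the invariants\<close>

text \<open>For j = 1 (resp. j = 2) the odd (resp. even) argument is ignored, so it does not matter
  that the corresponding corner invariant may be undefined.\<close>

definition corner_factor :: "nat \<Rightarrow> real \<Rightarrow> real \<Rightarrow> real" where
  "corner_factor j xe xo =
    (if j = 1 then xe / (xe - 1) else if j = 2 then xo / (xo - 1)
     else if j = 3 then xe / xo else (1 - xe) / (1 - xo))"

definition corners_defined :: "nat \<Rightarrow> (int \<Rightarrow> real^3) \<Rightarrow> int \<Rightarrow> bool" where
  "corners_defined j q i \<longleftrightarrow>
     (j \<noteq> 2 \<longrightarrow> corner_even q i \<noteq> None) \<and> (j \<noteq> 1 \<longrightarrow> corner_odd q i \<noteq> None)"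

lemma corners_defined_shift: "corners_defined j (\<lambda>k. P (i + k)) 0 = corners_defined j P i"
  unfolding corners_defined_def corner_even_shift corner_odd_shift ..

lemma Finv_eq_Some_prod:
  assumes "j \<in> {1, 2, 3, 4}" and "Finv j n P \<noteq> None"
  shows "Finv j n P = Some (\<Prod>i\<in>{0..<int n}. corner_factor j (the (corner_even P i)) (the (corner_odd P i)))"
  using assms unfolding Finv_def Let_def corner_factor_def
  by (elim insertE) (simp_all split: if_split_asm)

lemma Finv_corners_defined:
  assumes "Finv j n P \<noteq> None" and "i \<in> {0..<int n}"
  shows "corners_defined j P i"
  using assms unfolding Finv_def Let_def corners_defined_def
  by (simp split: if_split_asm)

text \<open>Bracket monomials in the window q (-2), ..., q 5, of degree zero in every vertex; they are
  read off by comparing the bracket expressions of the corner factors of P and T3 P.\<close>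

definition gauge :: "nat \<Rightarrow> (int \<Rightarrow> real^3) \<Rightarrow> real" where
  "gauge j q =
    (let p = (\<lambda>a b c. bracket (q a) (q b) (q c));
         d = (\<lambda>k. bracket (diagonal q k) (diagonal q (k + 1)) (diagonal q (k + 2)))
     in if j = 1 then d (-2) * p (-1) 0 1 / (p (-2) (-1) 1 * p (-1) 0 2 * p 0 1 3)
        else if j = 2 then p (-2) (-1) 2 * p (-1) 0 3 * p 0 1 4 * p 1 2 5
          / (d 0 * p (-1) 1 2 * p (-2) (-1) 0)
        else if j = 3 then d (-2) * d (-1) * d 0 * p (-2) (-1) 0 * p (-1) 0 1 * p (-2) 0 1
          * (p (-1) 1 2)\<^sup>2
          / (p (-2) 1 4 * p (-1) 2 5 * (p (-2) (-1) 1)\<^sup>2 * (p (-1) 0 2)^3 * (p 0 1 3)^3 * p 1 2 4)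
        else d (-1) * p (-2) 0 1 * p (-1) 1 2 * p (-2) (-1) 2 * p (-1) 0 3 * p 0 1 4 * p 1 2 5
          / (p (-2) 1 4 * p (-1) 2 5 * p (-2) (-1) 1 * (p (-1) 0 2)\<^sup>2 * (p 0 1 3)\<^sup>2 * p 1 2 4))"

lemmas polygon_bracket_simps = T3_eq_diagonal diagonal_def cross_inner_eq_bracket bracket_sort
  bracket_cross_chain_12 bracket_cross_chain_23 bracket_cross_shared_13

lemma corner_factor_T3_gauge_0:
  assumes j: "j \<in> {1, 2, 3, 4}" and nd: "nondegenerate q"
    and def: "corners_defined j q 0" "corners_defined j (T3 q) 0"
  shows "corner_factor j (the (corner_even (T3 q) 0)) (the (corner_odd (T3 q) 0))
           * gauge j (\<lambda>k. q (k + 1))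
       = corner_factor j (the (corner_even q 0)) (the (corner_odd q 0)) * gauge j q"
proof -
  have ratio: "y / (y - 1) = - (y / (1 - y))" for y :: real
    by (simp add: minus_divide_right)
  note simps = gauge_def polygon_bracket_simps field_simps power2_eq_square power3_eq_cube
    nondegenerate_bracket_nonzero[OF nd] nondegenerate_diagonal_bracket_nonzero[OF nd]
  consider "j = 1" | "j = 2" | "j = 3 \<or> j = 4"
    using j by blast
  then show ?thesis
  proof cases
    case 1
    with def have "corner_even q 0 \<noteq> None" "corner_even (T3 q) 0 \<noteq> None"
      by (simp_all add: corners_defined_def)
    note E = corner_even_in_brackets[OF this(1)] and E' = corner_even_in_brackets[OF this(2)]
    show ?thesis
      unfolding 1 corner_factor_def if_True ratio E(4) E'(4) unfolding E(3) E'(3)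
      using E(1,2) E'(1,2) by (simp add: simps)
  next
    case 2
    with def have "corner_odd q 0 \<noteq> None" "corner_odd (T3 q) 0 \<noteq> None"
      by (simp_all add: corners_defined_def)
    note O = corner_odd_in_brackets[OF this(1)] and O' = corner_odd_in_brackets[OF this(2)]
    show ?thesis
      unfolding 2 corner_factor_def ratio O(4) O'(4) unfolding O(3) O'(3)
      using O(1,2) O'(1,2) by (simp add: simps)
  next
    case 3
    with def have "corner_even q 0 \<noteq> None" "corner_even (T3 q) 0 \<noteq> None"
      "corner_odd q 0 \<noteq> None" "corner_odd (T3 q) 0 \<noteq> None"
      by (auto simp: corners_defined_def)
    note E = corner_even_in_brackets[OF this(1)] and E' = corner_even_in_brackets[OF this(2)]
      and O = corner_odd_in_brackets[OF this(3)] and O' = corner_odd_in_brackets[OF this(4)]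
    from 3 show ?thesis
    proof
      assume "j = 3"
      then show ?thesis
        unfolding corner_factor_def E(3) E'(3) O(3) O'(3)
        using E(1,2) E'(1,2) O(1,2) O'(1,2) by (simp add: simps)
    next
      assume "j = 4"
      then show ?thesis
        unfolding corner_factor_def E(4) E'(4) O(4) O'(4)
        using E(1,2) E'(1,2) O(1,2) O'(1,2) by (simp add: simps)
    qed
  qed
qed

lemma corner_factor_T3_gauge:
  assumes "j \<in> {1, 2, 3, 4}" and "nondegenerate P"
    and "corners_defined j P i" and "corners_defined j (T3 P) i"
  shows "corner_factor j (the (corner_even (T3 P) i)) (the (corner_odd (T3 P) i))
           * gauge j (\<lambda>k. P (i + 1 + k))
       = corner_factor j (the (corner_even P i)) (the (corner_odd P i)) * gauge j (\<lambda>k. P (i + k))"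
proof -
  have "(\<lambda>k. P (i + (k + 1))) = (\<lambda>k. P (i + 1 + k))"
    by (simp add: ac_simps)
  then show ?thesis
    using corner_factor_T3_gauge_0[of j "\<lambda>k. P (i + k)"] assms
    by (simp add: nondegenerate_shift corners_defined_shift T3_shift corner_even_shift
        corner_odd_shift)
qed

lemma gauge_nonzero_0:
  assumes j: "j \<in> {1, 2, 3, 4}" and nd: "nondegenerate q" and def: "corners_defined j (T3 q) 0"
  shows "gauge j q \<noteq> 0"
proof -
  note nonzero = nondegenerate_bracket_nonzero[OF nd] nondegenerate_diagonal_bracket_nonzero[OF nd]
  show ?thesis
  proof (cases "j = 2")
    case False
    with def have "corner_even (T3 q) 0 \<noteq> None"
      by (simp add: corners_defined_def)
    from corner_even_in_brackets(1,2)[OF this] have "bracket (q (-2)) (q 1) (q 4) \<noteq> 0"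
      and "bracket (q (-1)) (q 2) (q 5) \<noteq> 0"
      by (simp_all add: polygon_bracket_simps)
    then show ?thesis
      using j by (auto simp: gauge_def polygon_bracket_simps nonzero)
  qed (simp add: gauge_def polygon_bracket_simps nonzero)
qed

lemma gauge_nonzero:
  assumes "j \<in> {1, 2, 3, 4}" and "nondegenerate P" and "corners_defined j (T3 P) i"
  shows "gauge j (\<lambda>k. P (i + k)) \<noteq> 0"
  using gauge_nonzero_0[of j "\<lambda>k. P (i + k)"] assms
  by (simp add: nondegenerate_shift corners_defined_shift T3_shift)

lemma gauge_projective_invariant:
  assumes "\<And>k. c k \<noteq> 0" and "det M \<noteq> 0"
  shows "gauge j (\<lambda>k. c k *\<^sub>R (M *v q k)) = gauge j q"
  using assms
  by (simp add: gauge_def Let_def diagonal_def bracket_cross_matrix_scaleR bracket_matrix_scaleR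
      field_simps power2_eq_square power3_eq_cube)

section \<open>Monodromy and telescoping\<close>

lemma twisted_ngon_monodromy:
  assumes "twisted_ngon n P"
  obtains M :: "real^3^3" and c where "det M \<noteq> 0" "\<And>k. c k \<noteq> 0"
    "(\<lambda>k. P (int n + k)) = (\<lambda>k. c k *\<^sub>R (M *v P k))"
proof -
  from assms obtain M :: "real^3^3" where M: "invertible M"
    and "\<forall>i. \<exists>c. c \<noteq> 0 \<and> P (i + int n) = c *\<^sub>R (M *v P i)"
    unfolding twisted_ngon_def by blast
  then obtain c where c: "\<forall>i. c i \<noteq> 0 \<and> P (i + int n) = c i *\<^sub>R (M *v P i)"
    by metis
  show ?thesis
  proof (rule that[of M c])
    show "det M \<noteq> 0"
      using M invertible_det_nz by blast
  qed (use c in \<open>auto simp: add.commute\<close>)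
qed

lemma prod_atLeastLessThan_int_shift:
  fixes f :: "int \<Rightarrow> 'a::comm_monoid_mult"
  shows "(\<Prod>i\<in>{0..<int n}. f (i + 1)) * f 0 = (\<Prod>i\<in>{0..<int n}. f i) * f (int n)"
proof (induction n)
  case (Suc n)
  have range: "{0..<int (Suc n)} = insert (int n) {0..<int n}"
    by auto
  have "(\<Prod>i\<in>{0..<int (Suc n)}. f (i + 1)) * f 0
      = f (int n + 1) * ((\<Prod>i\<in>{0..<int n}. f (i + 1)) * f 0)"
    unfolding range by (simp add: ac_simps)
  also have "\<dots> = f (int n + 1) * ((\<Prod>i\<in>{0..<int n}. f i) * f (int n))"
    by (simp only: Suc.IH)
  also have "\<dots> = (\<Prod>i\<in>{0..<int (Suc n)}. f i) * f (int (Suc n))"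
    unfolding range by (simp add: ac_simps)
  finally show ?case .
qed simp

lemma prod_eq_by_periodic_gauge:
  fixes f g H :: "int \<Rightarrow> real"
  assumes step: "\<And>i. i \<in> {0..<int n} \<Longrightarrow> f i * H (i + 1) = g i * H i"
    and period: "H (int n) = H 0" and nonzero: "\<And>i. i \<in> {0..<int n} \<Longrightarrow> H i \<noteq> 0"
  shows "(\<Prod>i\<in>{0..<int n}. f i) = (\<Prod>i\<in>{0..<int n}. g i)"
proof (cases "n = 0")
  case False
  then have "H 0 \<noteq> 0"
    using nonzero[of 0] by simp
  then have shift: "(\<Prod>i\<in>{0..<int n}. H (i + 1)) = (\<Prod>i\<in>{0..<int n}. H i)"
    using prod_atLeastLessThan_int_shift[of H n] period by simp
  have "(\<Prod>i\<in>{0..<int n}. f i) * (\<Prod>i\<in>{0..<int n}. H (i + 1))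
      = (\<Prod>i\<in>{0..<int n}. g i) * (\<Prod>i\<in>{0..<int n}. H i)"
    unfolding prod.distrib[symmetric] using step by (intro prod.cong) auto
  moreover have "(\<Prod>i\<in>{0..<int n}. H i) \<noteq> 0"
    using nonzero by simp
  ultimately show ?thesis
    unfolding shift by simp
qed simp

theorem mainTheorem17:
  fixes n j :: nat and P :: "int \<Rightarrow> real^3"
  assumes "0 < n"
    and "twisted_ngon n P" and "three_nice P"
    and "twisted_ngon n (T3 P)"
    and "j \<in> {1,2,3,4}"
    and "Finv j n P \<noteq> None" and "Finv j n (T3 P) \<noteq> None"
  shows "Finv j n (T3 P) = Finv j n P"
proof -
  note j = \<open>j \<in> {1,2,3,4}\<close>
  have nd: "nondegenerate P"
    using nondegenerate_if_T3_twisted assms(2-4) .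
  obtain M c where M: "det M \<noteq> 0" and c: "\<And>k. c k \<noteq> 0"
    and monodromy: "(\<lambda>k. P (int n + k)) = (\<lambda>k. c k *\<^sub>R (M *v P k))"
    using twisted_ngon_monodromy[OF assms(2)] by blast
  have defined: "corners_defined j P i" "corners_defined j (T3 P) i" if "i \<in> {0..<int n}" for i
    using Finv_corners_defined assms(6,7) that by blast+
  have "(\<Prod>i\<in>{0..<int n}. corner_factor j (the (corner_even (T3 P) i)) (the (corner_odd (T3 P) i)))
      = (\<Prod>i\<in>{0..<int n}. corner_factor j (the (corner_even P i)) (the (corner_odd P i)))"
  proof (rule prod_eq_by_periodic_gauge[where H = "\<lambda>i. gauge j (\<lambda>k. P (i + k))"])
    show "gauge j (\<lambda>k. P (int n + k)) = gauge j (\<lambda>k. P (0 + k))"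
      unfolding monodromy gauge_projective_invariant[OF c M] by simp
  qed (use corner_factor_T3_gauge[OF j nd] gauge_nonzero[OF j nd] defined in auto)
  then show ?thesis
    unfolding Finv_eq_Some_prod[OF j assms(6)] Finv_eq_Some_prod[OF j assms(7)] by simp
qed

end
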